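(* Let $\mathbb F\subseteq\mathbb D$ be a finite subset of local height $n$. Then for all Banach spaces $X,Y$ and all bounded linear operators $T:X\to Y$, $$\tau(T|\mathcal H(\mathbb F))\le\tau(T|\mathcal H(\mathbb D_1^n)).$$
   Context: Dyadic intervals: $\Delta_k^{(j)}:=[\frac{j-1}{2^k},\frac{j}{2^k})$ for $k\ge0$ (so $\Delta_0^{(1)}=[0,1)$). Haar functions: for $k\ge1$, integer $j$, $\chi_k^{(j)}(t)=+2^{(k-1)/2}$ on $\Delta_k^{(2j-1)}$, $-2^{(k-1)/2}$ on $\Delta_k^{(2j)}$, $0$ otherwise, $t\in[0,1)$. Dyadic tree $\mathbb D:=\{(k,j):k=1,2,\dots;\ j=1,\dots,2^{k-1}\}$; $\mathbb D_m^n:=\{(k,j):k=m,\dots,n;\ j=1,\dots,2^{k-1}\}$. Branches: for $t\in[0,1)$, $\mathbb B(t):=\{(k,j)\in\mathbb D: t\in\Delta_{k-1}^{(j)}\}$. Local height of finite $\mathbb F\subseteq\mathbb D$: $\mathrm{lh}(\mathbb F):=\max_{t\in[0,1)}|\mathbb F\cap\mathbb B(t)|$. For finite $\mathbb F\subseteq\mathbb D$ and bounded linear $T:X\to Y$, $\tau(T|\mathcal H(\mathbb F))$ is the least $c\ge0$ such that $\|\sum_{(k,j)\in\mathbb F}Tx_k^{(j)}\chi_k^{(j)}|L_2\|\le c(\sum_{(k,j)\in\mathbb F}\|x_k^{(j)}\|^2)^{1/2}$ for all $x_k^{(j)}\in X$, where $\|\cdot|L_2\|$ is the Bochner $L_2([0,1),Y)$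 norm. *)

theory Defs
  imports "HOL-Analysis.Analysis"
begin

definition dyadic_interval :: "nat \<Rightarrow> int \<Rightarrow> real set" where
  "dyadic_interval k j = {(real_of_int j - 1) / 2 ^ k ..< real_of_int j / 2 ^ k}"

definition haar :: "nat \<Rightarrow> int \<Rightarrow> real \<Rightarrow> real" where
  "haar k j t =
     (if t \<in> {0..<1} \<and> t \<in> dyadic_interval k (2 * j - 1) then 2 powr ((real k - 1) / 2)
      else if t \<in> {0..<1} \<and> t \<in> dyadic_interval k (2 * j) then - (2 powr ((real k - 1) / 2))
      else 0)"

definition dyadic_tree :: "(nat \<times> nat) set" where
  "dyadic_tree = {(k, j). 1 \<le> k \<and> 1 \<le> j \<and> j \<le> 2 ^ (k - 1)}"

definition dyadic_layers :: "nat \<Rightarrow> nat \<Rightarrow> (nat \<times> nat) set" where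
  "dyadic_layers m n = {(k, j). m \<le> k \<and> k \<le> n \<and> 1 \<le> j \<and> j \<le> 2 ^ (k - 1)}"

definition branch :: "real \<Rightarrow> (nat \<times> nat) set" where
  "branch t = {(k, j) \<in> dyadic_tree. t \<in> dyadic_interval (k - 1) (int j)}"

definition local_height :: "(nat \<times> nat) set \<Rightarrow> nat" where
  "local_height F = Max ((\<lambda>t. card (F \<inter> branch t)) ` {0..<1})"

definition L2_norm01 :: "(real \<Rightarrow> 'b::real_normed_vector) \<Rightarrow> real" where
  "L2_norm01 f = sqrt (LINT t:{0..<1}|lborel. (norm (f t))\<^sup>2)"

definition tau :: "('a::real_normed_vector \<Rightarrow> 'b::real_normed_vector) \<Rightarrow> (nat \<times> nat) set \<Rightarrow> real" where
  "tau T F = Inf {c. c \<ge> 0 \<and> (\<forall>x :: nat \<times> nat \<Rightarrow> 'a.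
      L2_norm01 (\<lambda>t. \<Sum>(k, j)\<in>F. haar k (int j) t *\<^sub>R T (x (k, j)))
        \<le> c * sqrt (\<Sum>(k, j)\<in>F. (norm (x (k, j)))\<^sup>2))}"

end

theory Submission
  imports Defs "HOL-Library.Tree"
begin

text \<open>
  For a finite set \<open>S\<close> of nodes, coefficients \<open>x\<close> and a constant \<open>c\<close>, consider the excess
  \<open>\<integral>\<^sub>\<Delta> \<bar>y + \<Sum> \<chi>\<^sub>I T x\<^sub>I\<bar>\<^sup>2 - c\<^sup>2 \<Sum> \<bar>x\<^sub>I\<bar>\<^sup>2\<close> of the part of \<open>S\<close> below a node \<open>J\<close>, integrated over the
  support \<open>\<Delta>\<close> of \<open>\<chi>\<^sub>J\<close>, where the vector \<open>y\<close> is the contribution of the coarser levels.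
  On each half of \<open>\<Delta>\<close> the term of \<open>J\<close> is a constant \<open>\<plusminus>T x\<^sub>J\<close>, so the excess at \<open>J\<close> is the
  mean of the excesses at the two children with \<open>y\<close> shifted by \<open>\<plusminus>T x\<^sub>J\<close>, minus \<open>c\<^sup>2 \<bar>x\<^sub>J\<bar>\<^sup>2\<close>.
  Unfolding this recursion, the nodes of \<open>S\<close> become the nodes of a binary tree of vectors,
  while at a node outside \<open>S\<close> the mean is bounded by the larger of the two children.
  Every branch meets \<open>S\<close> in at most \<open>n\<close> nodes, so the tree has height at most \<open>n\<close>, and the
  value of such a tree is the excess of a coefficient family on the full layers \<open>D\<^sub>1\<^sup>n\<close>
  (padded with zeros). Hence every constant admissible for \<open>D\<^sub>1\<^sup>n\<close> is admissible for \<open>S\<close>.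
\<close>

section \<open>Dyadic subtrees and their intervals\<close>

definition left_child :: "nat \<times> nat \<Rightarrow> nat \<times> nat" where
  "left_child J = (Suc (fst J), 2 * snd J - 1)"

definition right_child :: "nat \<times> nat \<Rightarrow> nat \<times> nat" where
  "right_child J = (Suc (fst J), 2 * snd J)"

text \<open>\<open>(k', j')\<close> lies below \<open>(k, j)\<close> iff the 0-based index \<open>j' - 1\<close> shifted right by
  \<open>k' - k\<close> bits is \<open>j - 1\<close>.\<close>
definition dyadic_subtree :: "nat \<times> nat \<Rightarrow> (nat \<times> nat) set" where
  "dyadic_subtree J =
     {I. fst J \<le> fst I \<and> 1 \<le> snd I \<and> (snd I - 1) div 2 ^ (fst I - fst J) = snd J - 1}"

text \<open>The support \<open>\<Delta>\<^bsub>k-1\<^esub>\<^bsup>(j)\<^esup>\<close> of the Haar function \<open>\<chi>\<^bsub>k\<^esub>\<^bsup>(j)\<^esup>\<close> at the node \<open>(k, j)\<close>.\<close>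
definition node_interval :: "nat \<times> nat \<Rightarrow> real set" where
  "node_interval J = dyadic_interval (fst J - 1) (int (snd J))"

definition haar_amplitude :: "nat \<Rightarrow> real" where
  "haar_amplitude k = 2 powr ((real k - 1) / 2)"

definition level_length :: "nat \<Rightarrow> real" where
  "level_length k = 1 / 2 ^ (k - 1)"

lemma fst_left_child [simp]: "fst (left_child J) = Suc (fst J)"
  and fst_right_child [simp]: "fst (right_child J) = Suc (fst J)"
  by (simp_all add: left_child_def right_child_def)

lemma mem_dyadic_tree: "J \<in> dyadic_tree \<longleftrightarrow> 1 \<le> fst J \<and> 1 \<le> snd J \<and> snd J \<le> 2 ^ (fst J - 1)"
  by (cases J) (simp add: dyadic_tree_def)

lemma child_in_dyadic_tree:
  assumes "J \<in> dyadic_tree" "C \<in> {left_child J, right_child J}"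
  shows "C \<in> dyadic_tree"
proof -
  have "(2::nat) ^ fst J = 2 * 2 ^ (fst J - 1)"
    using assms(1) by (cases "fst J") (auto simp: mem_dyadic_tree)
  then show ?thesis
    using assms by (auto simp: mem_dyadic_tree left_child_def right_child_def)
qed

lemma self_in_dyadic_subtree: "1 \<le> snd J \<Longrightarrow> J \<in> dyadic_subtree J"
  by (simp add: dyadic_subtree_def)

lemma dyadic_subtree_level: "I \<in> dyadic_subtree J \<Longrightarrow> fst J \<le> fst I"
  by (simp add: dyadic_subtree_def)

lemma not_in_dyadic_subtree_child: "C \<in> {left_child J, right_child J} \<Longrightarrow> J \<notin> dyadic_subtree C"
  by (auto simp: dyadic_subtree_def)

lemma dyadic_subtree_children_disjoint:
  "1 \<le> snd J \<Longrightarrow> dyadic_subtree (left_child J) \<inter> dyadic_subtree (right_child J) = {}"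
  by (auto simp: dyadic_subtree_def left_child_def right_child_def)

lemma dyadic_subtree_unfold:
  assumes "1 \<le> snd J"
  shows "dyadic_subtree J
    = insert J (dyadic_subtree (left_child J) \<union> dyadic_subtree (right_child J))"
  (is "_ = ?R")
proof (intro set_eqI)
  fix I :: "nat \<times> nat"
  obtain k j where J: "J = (k, j)" by force
  obtain k' j' where I: "I = (k', j')" by force
  show "I \<in> dyadic_subtree J \<longleftrightarrow> I \<in> ?R"
  proof (cases "k' \<le> k")
    case True
    then show ?thesis
      using assms by (auto simp: J I dyadic_subtree_def left_child_def right_child_def)
  next
    case False
    then have "(2::nat) ^ (k' - k) = 2 ^ (k' - Suc k) * 2"
      by (simp flip: power_Suc2 add: Suc_diff_Suc)
    then have "I \<in> dyadic_subtree J \<longleftrightarrow> 1 \<le> j' \<and> (j' - 1) div 2 ^ (k' - Suc k) div 2 = j - 1"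
      using False by (simp add: J I dyadic_subtree_def div_mult2_eq)
    moreover have "q div 2 = j - 1 \<longleftrightarrow> q = 2 * j - 1 - 1 \<or> q = 2 * j - 1" for q :: nat
      using assms J by auto
    moreover have "I \<in> ?R \<longleftrightarrow> 1 \<le> j' \<and>
        ((j' - 1) div 2 ^ (k' - Suc k) = 2 * j - 1 - 1 \<or> (j' - 1) div 2 ^ (k' - Suc k) = 2 * j - 1)"
      using False by (auto simp: J I dyadic_subtree_def left_child_def right_child_def)
    ultimately show ?thesis
      by simp
  qed
qed

lemma dyadic_subtree_root: "dyadic_subtree (1, 1) = dyadic_tree"
  by (auto simp: dyadic_subtree_def dyadic_tree_def div_eq_0_iff)

lemma dyadic_subtree_induct [consumes 2, case_names disjoint node]:
  assumes "finite S" "J \<in> dyadic_tree"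
    and disjoint: "\<And>J. J \<in> dyadic_tree \<Longrightarrow> S \<inter> dyadic_subtree J = {} \<Longrightarrow> P J"
    and node: "\<And>J. J \<in> dyadic_tree \<Longrightarrow> P (left_child J) \<Longrightarrow> P (right_child J) \<Longrightarrow> P J"
  shows "P J"
proof -
  obtain N where N: "\<forall>I\<in>S. fst I < N"
    using assms(1) finite_nat_set_iff_bounded[of "fst ` S"] by auto
  show ?thesis
    using assms(2)
  proof (induction "N - fst J" arbitrary: J rule: less_induct)
    case less
    show ?case
    proof (cases "N \<le> fst J")
      case True
      then have "S \<inter> dyadic_subtree J = {}"
        using N dyadic_subtree_level by fastforce
      then show ?thesis
        using disjoint less.prems by blast
    next
      case False
      have "P C" if "C \<in> {left_child J, right_child J}" for C
        by (rule less.hyps) (use that False child_in_dyadic_tree less.prems in auto)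
      then show ?thesis
        using node less.prems by blast
    qed
  qed
qed

lemma finite_dyadic_layers: "finite (dyadic_layers m n)"
proof (rule finite_subset)
  show "dyadic_layers m n \<subseteq> {..n} \<times> {..2 ^ n}"
  proof
    fix I
    assume "I \<in> dyadic_layers m n"
    then have "fst I \<le> n" "snd I \<le> 2 ^ (fst I - 1)"
      by (auto simp: dyadic_layers_def)
    moreover have "(2::nat) ^ (fst I - 1) \<le> 2 ^ n"
      using \<open>fst I \<le> n\<close> by (simp add: power_increasing)
    ultimately show "I \<in> {..n} \<times> {..2 ^ n}"
      by (auto simp: mem_Times_iff simp del: power_increasing_iff)
  qed
qed simp

lemma node_interval_eq:
  "node_interval J = {(real (snd J) - 1) / 2 ^ (fst J - 1) ..< real (snd J) / 2 ^ (fst J - 1)}"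
  by (simp add: node_interval_def dyadic_interval_def)

lemma node_interval_root: "node_interval (1, 1) = {0..<1}"
  by (simp add: node_interval_eq)

lemma node_interval_subset_unit:
  assumes "J \<in> dyadic_tree"
  shows "node_interval J \<subseteq> {0..<1}"
proof
  fix t
  assume "t \<in> node_interval J"
  then have "(real (snd J) - 1) / 2 ^ (fst J - 1) \<le> t" "t < real (snd J) / 2 ^ (fst J - 1)"
    by (simp_all add: node_interval_eq)
  moreover have "real (snd J) \<le> 2 ^ (fst J - 1)" "1 \<le> snd J"
    using assms unfolding mem_dyadic_tree by (metis of_nat_le_iff of_nat_numeral of_nat_power)+
  then have "0 \<le> (real (snd J) - 1) / 2 ^ (fst J - 1)" "real (snd J) / 2 ^ (fst J - 1) \<le> 1"
    by simp_all
  ultimately show "t \<in> {0..<1}"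
    unfolding atLeastLessThan_iff by (intro conjI) linarith+
qed

lemma node_interval_children:
  assumes "J \<in> dyadic_tree"
  shows "node_interval J = node_interval (left_child J) \<union> node_interval (right_child J)"
    and "node_interval (left_child J) \<inter> node_interval (right_child J) = {}"
proof -
  obtain k where k: "fst J = Suc k"
    using assms not0_implies_Suc by (fastforce simp: mem_dyadic_tree)
  define j where "j = snd J"
  have J: "J = (Suc k, j)" "1 \<le> j"
    using assms k by (simp_all add: j_def prod_eq_iff mem_dyadic_tree)
  define a m b where "a = (real j - 1) / 2 ^ k" and "m = (real j - 1 / 2) / 2 ^ k"
    and "b = real j / 2 ^ k"
  have "a \<le> m" "m \<le> b"
    by (simp_all add: a_def m_def b_def divide_right_mono)
  have "real (2 * j - 1) = 2 * real j - 1"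
    using J by (simp add: of_nat_diff)
  then have "node_interval J = {a..<b}" "node_interval (left_child J) = {a..<m}"
    "node_interval (right_child J) = {m..<b}"
    by (simp_all add: J a_def m_def b_def node_interval_eq left_child_def right_child_def
        diff_divide_distrib)
  with \<open>a \<le> m\<close> \<open>m \<le> b\<close>
  show "node_interval J = node_interval (left_child J) \<union> node_interval (right_child J)"
    and "node_interval (left_child J) \<inter> node_interval (right_child J) = {}"
    by auto
qed

lemma node_interval_nonempty: "node_interval J \<noteq> {}"
  by (simp add: node_interval_eq divide_strict_right_mono)

lemma dyadic_subtree_subset:
  assumes "J \<in> dyadic_tree" "I \<in> dyadic_subtree J"
  shows "I \<in> dyadic_tree \<and> node_interval I \<subseteq> node_interval J"
proof -
  have "finite {I}"
    by simp
  from this assms(1)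
  have "I \<in> dyadic_subtree J \<longrightarrow> I \<in> dyadic_tree \<and> node_interval I \<subseteq> node_interval J"
  proof (induction J rule: dyadic_subtree_induct)
    case (disjoint J)
    then show ?case
      by blast
  next
    case (node J)
    then show ?case
      using dyadic_subtree_unfold[of J] node_interval_children(1)[of J]
      by (auto simp: mem_dyadic_tree)
  qed
  with assms(2) show ?thesis
    by blast
qed

lemma mem_branch_iff: "J \<in> branch t \<longleftrightarrow> J \<in> dyadic_tree \<and> t \<in> node_interval J"
  by (cases J) (simp add: branch_def node_interval_def)

lemma haar_on_node_interval:
  assumes "J \<in> dyadic_tree"
  shows "t \<in> node_interval (left_child J) \<Longrightarrow>
      haar (fst J) (int (snd J)) t = haar_amplitude (fst J)"
    and "t \<in> node_interval (right_child J) \<Longrightarrow>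
      haar (fst J) (int (snd J)) t = - haar_amplitude (fst J)"
    and "t \<notin> node_interval J \<Longrightarrow> haar (fst J) (int (snd J)) t = 0"
proof -
  have "node_interval (left_child J) = dyadic_interval (fst J) (2 * int (snd J) - 1)"
    "node_interval (right_child J) = dyadic_interval (fst J) (2 * int (snd J))"
    using assms by (simp_all add: node_interval_def left_child_def right_child_def
        mem_dyadic_tree of_nat_diff)
  moreover note node_interval_children[OF assms] node_interval_subset_unit[OF assms]
  ultimately show "t \<in> node_interval (left_child J) \<Longrightarrow>
      haar (fst J) (int (snd J)) t = haar_amplitude (fst J)"
    and "t \<in> node_interval (right_child J) \<Longrightarrow>
      haar (fst J) (int (snd J)) t = - haar_amplitude (fst J)"
    and "t \<notin> node_interval J \<Longrightarrow> haar (fst J) (int (snd J)) t = 0"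
    by (auto simp: haar_def haar_amplitude_def)
qed

lemma level_length_Suc: "1 \<le> k \<Longrightarrow> level_length (Suc k) = level_length k / 2"
  by (cases k) (simp_all add: level_length_def)

lemma haar_amplitude_sq: "1 \<le> k \<Longrightarrow> (haar_amplitude k)\<^sup>2 = 2 ^ (k - 1)"
proof -
  assume "1 \<le> k"
  have "(haar_amplitude k)\<^sup>2 = 2 powr ((real k - 1) / 2) * 2 powr ((real k - 1) / 2)"
    by (simp add: haar_amplitude_def power2_eq_square)
  also have "\<dots> = 2 powr real (k - 1)"
    using \<open>1 \<le> k\<close> by (simp add: of_nat_diff flip: powr_add)
  also have "\<dots> = 2 ^ (k - 1)"
    by (simp add: powr_realpow)
  finally show ?thesis .
qed

lemma level_length_mult_haar_amplitude_sq: "1 \<le> k \<Longrightarrow> level_length k * (haar_amplitude k)\<^sup>2 = 1"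
  by (simp add: level_length_def haar_amplitude_sq)

lemma emeasure_node_interval: "emeasure lborel (node_interval J) = level_length (fst J)"
proof -
  have "(real (snd J) - 1) / 2 ^ (fst J - 1) \<le> real (snd J) / 2 ^ (fst J - 1)"
    by (simp add: divide_right_mono)
  then show ?thesis
    by (simp add: node_interval_eq level_length_def diff_divide_distrib)
qed

section \<open>The excess functional\<close>

definition haar_partial_sum ::
    "(nat \<times> nat) set \<Rightarrow> (nat \<times> nat \<Rightarrow> 'b::real_vector) \<Rightarrow> nat \<times> nat \<Rightarrow> real \<Rightarrow> 'b" where
  "haar_partial_sum S v J t = (\<Sum>I\<in>S \<inter> dyadic_subtree J. haar (fst I) (int (snd I)) t *\<^sub>R v I)"

text \<open>The value of the term of \<open>J\<close> on the left half of its support; on the right half it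
  is the negative.\<close>
definition node_term :: "(nat \<times> nat) set \<Rightarrow> (nat \<times> nat \<Rightarrow> 'b::real_vector) \<Rightarrow> nat \<times> nat \<Rightarrow> 'b" where
  "node_term S v J = (if J \<in> S then haar_amplitude (fst J) *\<^sub>R v J else 0)"

lemma sum_dyadic_subtree_unfold:
  assumes "finite S" "1 \<le> snd J"
  shows "(\<Sum>I\<in>S \<inter> dyadic_subtree J. g I) = (if J \<in> S then g J else 0)
    + (\<Sum>I\<in>S \<inter> dyadic_subtree (left_child J). g I)
    + (\<Sum>I\<in>S \<inter> dyadic_subtree (right_child J). g I)"
proof -
  have "S \<inter> dyadic_subtree J
      = (S \<inter> {J}) \<union> ((S \<inter> dyadic_subtree (left_child J)) \<union> (S \<inter> dyadic_subtree (right_child J)))"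
    using dyadic_subtree_unfold[OF assms(2)] by auto
  moreover have "J \<notin> dyadic_subtree (left_child J)" "J \<notin> dyadic_subtree (right_child J)"
    by (simp_all add: not_in_dyadic_subtree_child)
  moreover note dyadic_subtree_children_disjoint[OF assms(2)]
  ultimately show ?thesis
    using assms(1) by (simp add: sum.union_disjoint Int_Un_distrib2 add.assoc disjoint_iff)
qed

lemma haar_partial_sum_outside:
  assumes "J \<in> dyadic_tree" "t \<notin> node_interval J"
  shows "haar_partial_sum S v J t = 0"
  unfolding haar_partial_sum_def
proof (rule sum.neutral, rule ballI)
  fix I
  assume "I \<in> S \<inter> dyadic_subtree J"
  with assms have "I \<in> dyadic_tree" "t \<notin> node_interval I"
    using dyadic_subtree_subset[OF assms(1)] by blast+
  then show "haar (fst I) (int (snd I)) t *\<^sub>R v I = 0"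
    by (simp add: haar_on_node_interval(3))
qed

lemma haar_partial_sum_on_children:
  assumes "finite S" "J \<in> dyadic_tree"
  shows "t \<in> node_interval (left_child J) \<Longrightarrow>
           haar_partial_sum S v J t = node_term S v J + haar_partial_sum S v (left_child J) t"
    and "t \<in> node_interval (right_child J) \<Longrightarrow>
           haar_partial_sum S v J t = - node_term S v J + haar_partial_sum S v (right_child J) t"
proof -
  have unfold: "haar_partial_sum S v J t
      = (if J \<in> S then haar (fst J) (int (snd J)) t *\<^sub>R v J else 0)
        + haar_partial_sum S v (left_child J) t + haar_partial_sum S v (right_child J) t"
    using assms by (simp add: haar_partial_sum_def sum_dyadic_subtree_unfold mem_dyadic_tree)
  have children: "left_child J \<in> dyadic_tree" "right_child J \<in> dyadic_tree"
    using child_in_dyadic_tree[OF assms(2)] by simp_all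
  note disjoint = node_interval_children(2)[OF assms(2)]
  show "t \<in> node_interval (left_child J) \<Longrightarrow>
          haar_partial_sum S v J t = node_term S v J + haar_partial_sum S v (left_child J) t"
    using haar_partial_sum_outside[OF children(2), of t S v] disjoint
    by (auto simp: unfold node_term_def haar_on_node_interval(1)[OF assms(2)])
  show "t \<in> node_interval (right_child J) \<Longrightarrow>
          haar_partial_sum S v J t = - node_term S v J + haar_partial_sum S v (right_child J) t"
    using haar_partial_sum_outside[OF children(1), of t S v] disjoint
    by (auto simp: unfold node_term_def haar_on_node_interval(2)[OF assms(2)])
qed

lemma node_interval_sets [measurable]: "node_interval J \<in> sets borel"
  by (simp add: node_interval_eq)

lemma set_integrable_const_node_interval: "set_integrable lborel (node_interval J) (\<lambda>_. c :: real)"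
  unfolding set_integrable_def
  by (intro integrable_scaleR_left integrable_real_indicator) (simp_all add: emeasure_node_interval)

text \<open>Integrability is proved along the dyadic recursion rather than via measurability,
  which avoids any separability assumption on the target space.\<close>
lemma set_integrable_haar_partial_sum:
  fixes v :: "nat \<times> nat \<Rightarrow> 'b::real_normed_vector"
  assumes "finite S" "J \<in> dyadic_tree"
  shows "set_integrable lborel (node_interval J) (\<lambda>t. (norm (y + haar_partial_sum S v J t))\<^sup>2)"
  using assms
proof (induction J arbitrary: y rule: dyadic_subtree_induct)
  case (disjoint J)
  then show ?case
    by (simp add: haar_partial_sum_def set_integrable_const_node_interval)
next
  case (node J)
  let ?f = "\<lambda>t. (norm (y + haar_partial_sum S v J t))\<^sup>2"
  have "set_integrable lborel (node_interval (left_child J)) ?f"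
    using node.IH(1)[of "y + node_term S v J"]
    by (subst set_integrable_cong[OF refl refl])
      (simp_all add: haar_partial_sum_on_children(1)[OF assms(1) node.hyps] add.assoc)
  moreover have "set_integrable lborel (node_interval (right_child J)) ?f"
    using node.IH(2)[of "y - node_term S v J"]
    by (subst set_integrable_cong[OF refl refl])
      (simp_all add: haar_partial_sum_on_children(2)[OF assms(1) node.hyps] algebra_simps)
  ultimately show ?case
    unfolding node_interval_children(1)[OF node.hyps] by (rule set_integrable_Un) simp_all
qed

text \<open>\<open>y\<close> is the contribution of the terms above \<open>J\<close>, which is constant on \<open>node_interval J\<close>.\<close>
definition haar_excess :: "real \<Rightarrow> ('a::real_normed_vector \<Rightarrow> 'b::real_normed_vector) \<Rightarrow>
    (nat \<times> nat) set \<Rightarrow> (nat \<times> nat \<Rightarrow> 'a) \<Rightarrow> nat \<times> nat \<Rightarrow> 'b \<Rightarrow> real" where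
  "haar_excess c T S x J y =
     (LINT t:node_interval J|lborel. (norm (y + haar_partial_sum S (T \<circ> x) J t))\<^sup>2)
     - c\<^sup>2 * (\<Sum>I\<in>S \<inter> dyadic_subtree J. (norm (x I))\<^sup>2)"

lemma haar_excess_disjoint:
  assumes "S \<inter> dyadic_subtree J = {}"
  shows "haar_excess c T S x J y = level_length (fst J) * (norm y)\<^sup>2"
proof -
  have "(LINT t:node_interval J|lborel. (norm y)\<^sup>2) = measure lborel (node_interval J) *\<^sub>R (norm y)\<^sup>2"
    by (rule set_integral_const) (simp_all add: emeasure_node_interval)
  moreover have "measure lborel (node_interval J) = level_length (fst J)"
    by (simp add: measure_def emeasure_node_interval level_length_def)
  ultimately show ?thesis
    using assms by (simp add: haar_excess_def haar_partial_sum_def)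
qed

lemma haar_excess_split:
  assumes "finite S" "J \<in> dyadic_tree"
  shows "haar_excess c T S x J y
     = haar_excess c T S x (left_child J) (y + node_term S (T \<circ> x) J)
       + haar_excess c T S x (right_child J) (y - node_term S (T \<circ> x) J)
       - (if J \<in> S then c\<^sup>2 * (norm (x J))\<^sup>2 else 0)"
proof -
  let ?f = "\<lambda>t. (norm (y + haar_partial_sum S (T \<circ> x) J t))\<^sup>2"
  let ?y = "node_term S (T \<circ> x) J"
  note children = node_interval_children[OF assms(2)]
  have "set_integrable lborel (node_interval J) ?f"
    by (rule set_integrable_haar_partial_sum[OF assms])
  then have "set_integrable lborel (node_interval (left_child J)) ?f"
    "set_integrable lborel (node_interval (right_child J)) ?f"
    by (auto intro: set_integrable_subset simp: children(1))
  then have "(LINT t:node_interval J|lborel. ?f t)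
      = (LINT t:node_interval (left_child J)|lborel. ?f t)
        + (LINT t:node_interval (right_child J)|lborel. ?f t)"
    unfolding children(1) by (rule set_integral_Un[OF children(2)])
  also have "(LINT t:node_interval (left_child J)|lborel. ?f t)
      = (LINT t:node_interval (left_child J)|lborel.
           (norm ((y + ?y) + haar_partial_sum S (T \<circ> x) (left_child J) t))\<^sup>2)"
    by (rule set_lebesgue_integral_cong)
      (simp_all add: haar_partial_sum_on_children(1)[OF assms] add.assoc)
  also have "(LINT t:node_interval (right_child J)|lborel. ?f t)
      = (LINT t:node_interval (right_child J)|lborel.
           (norm ((y - ?y) + haar_partial_sum S (T \<circ> x) (right_child J) t))\<^sup>2)"
    by (rule set_lebesgue_integral_cong)
      (simp_all add: haar_partial_sum_on_children(2)[OF assms] algebra_simps)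
  finally have "(LINT t:node_interval J|lborel. ?f t)
      = (LINT t:node_interval (left_child J)|lborel.
           (norm ((y + ?y) + haar_partial_sum S (T \<circ> x) (left_child J) t))\<^sup>2)
        + (LINT t:node_interval (right_child J)|lborel.
           (norm ((y - ?y) + haar_partial_sum S (T \<circ> x) (right_child J) t))\<^sup>2)" .
  then show ?thesis
    using assms unfolding haar_excess_def
    by (simp add: sum_dyadic_subtree_unfold mem_dyadic_tree algebra_simps)
qed

section \<open>Binary trees of coefficients\<close>

text \<open>The recursion satisfied by the excess, with a node \<open>a\<close> shifting the left subtree by
  \<open>T a\<close> and the right one by \<open>-T a\<close>, taken as a definition on binary trees.\<close>
fun tree_excess ::
    "('a::real_normed_vector \<Rightarrow> 'b::real_normed_vector) \<Rightarrow> real \<Rightarrow> 'a tree \<Rightarrow> 'b \<Rightarrow> real" where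
  "tree_excess T c Leaf y = (norm y)\<^sup>2"
| "tree_excess T c (Node l a r) y =
     tree_excess T c l (y + T a) / 2 + tree_excess T c r (y - T a) / 2 - c\<^sup>2 * (norm a)\<^sup>2"

fun coeff_tree :: "(nat \<times> nat \<Rightarrow> 'a::real_vector) \<Rightarrow> nat \<times> nat \<Rightarrow> nat \<Rightarrow> 'a tree" where
  "coeff_tree x J 0 = Leaf"
| "coeff_tree x J (Suc m) =
     Node (coeff_tree x (left_child J) m) (haar_amplitude (fst J) *\<^sub>R x J)
       (coeff_tree x (right_child J) m)"

lemma height_coeff_tree [simp]: "height (coeff_tree x J m) = m"
  by (induction m arbitrary: J) auto

lemma tree_excess_zero_coeff_tree:
  "linear T \<Longrightarrow> tree_excess T c (coeff_tree (\<lambda>_. 0) J m) y = (norm y)\<^sup>2"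
  by (induction m arbitrary: J y) (simp_all add: linear_0)

lemma coeff_tree_cong:
  "1 \<le> snd J \<Longrightarrow> (\<And>I. I \<in> dyadic_subtree J \<Longrightarrow> x I = x' I) \<Longrightarrow> coeff_tree x J m = coeff_tree x' J m"
proof (induction m arbitrary: J)
  case 0
  then show ?case
    by simp
next
  case (Suc m)
  have "1 \<le> snd (left_child J)" "1 \<le> snd (right_child J)"
    using Suc.prems(1) by (simp_all add: left_child_def right_child_def)
  then show ?case
    using Suc dyadic_subtree_unfold[OF Suc.prems(1)] by simp
qed

text \<open>Missing levels are filled with zero coefficients, which do not change the value.\<close>
lemma tree_excess_eq_coeff_tree:
  fixes T :: "'a::real_normed_vector \<Rightarrow> 'b::real_normed_vector"
  assumes "linear T" "1 \<le> snd J" "height z \<le> m"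
  shows "\<exists>x. \<forall>y. tree_excess T c (coeff_tree x J m) y = tree_excess T c z y"
  using assms(2,3)
proof (induction z arbitrary: m J)
  case Leaf
  show ?case
    by (intro exI[of _ "\<lambda>_. 0"]) (simp add: tree_excess_zero_coeff_tree[OF assms(1)])
next
  case (Node l a r)
  then obtain m' where m: "m = Suc m'" "height l \<le> m'" "height r \<le> m'"
    by (cases m) auto
  have snd_children: "1 \<le> snd (left_child J)" "1 \<le> snd (right_child J)"
    using Node.prems(1) by (simp_all add: left_child_def right_child_def)
  obtain xl
    where xl: "\<forall>y. tree_excess T c (coeff_tree xl (left_child J) m') y = tree_excess T c l y"
    using Node.IH(1)[OF snd_children(1) m(2)] by blast
  obtain xr
    where xr: "\<forall>y. tree_excess T c (coeff_tree xr (right_child J) m') y = tree_excess T c r y"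
    using Node.IH(2)[OF snd_children(2) m(3)] by blast
  define x where "x I = (if I = J then (1 / haar_amplitude (fst J)) *\<^sub>R a
      else if I \<in> dyadic_subtree (left_child J) then xl I else xr I)" for I
  have left: "coeff_tree x (left_child J) m' = coeff_tree xl (left_child J) m'"
    using not_in_dyadic_subtree_child[of "left_child J" J]
    by (intro coeff_tree_cong[OF snd_children(1)]) (auto simp: x_def)
  have right: "coeff_tree x (right_child J) m' = coeff_tree xr (right_child J) m'"
    using not_in_dyadic_subtree_child[of "right_child J" J]
      dyadic_subtree_children_disjoint[OF Node.prems(1)]
    by (intro coeff_tree_cong[OF snd_children(2)]) (auto simp: x_def)
  have root: "haar_amplitude (fst J) *\<^sub>R x J = a"
    by (simp add: x_def haar_amplitude_def)
  show ?case
    by (intro exI[of _ x]) (simp add: m(1) left right root xl xr)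
qed

lemma norm_add_sq_le: "(norm (a + b))\<^sup>2 \<le> 2 * (norm a)\<^sup>2 + 2 * (norm b)\<^sup>2"
proof -
  have "(norm (a + b))\<^sup>2 \<le> (norm a + norm b)\<^sup>2"
    by (simp add: norm_triangle_ineq power_mono)
  also have "\<dots> \<le> 2 * (norm a)\<^sup>2 + 2 * (norm b)\<^sup>2"
    by (simp add: power2_sum) (smt (verit) sum_squares_bound)
  finally show ?thesis .
qed

lemma tree_excess_le_pow_height:
  fixes T :: "'a::real_normed_vector \<Rightarrow> 'b::real_normed_vector"
  assumes T: "\<And>a. norm (T a) \<le> K * norm a" and c: "2 ^ height z * K\<^sup>2 \<le> c\<^sup>2"
  shows "tree_excess T c z y \<le> 2 ^ height z * (norm y)\<^sup>2"
  using c
proof (induction z arbitrary: y)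
  case Leaf
  then show ?case
    by simp
next
  case (Node l a r)
  define h where "h = max (height l) (height r)"
  have c_Suc: "2 ^ Suc h * K\<^sup>2 \<le> c\<^sup>2"
    using Node.prems by (simp add: h_def)
  have mono: "(2::real) ^ i * u \<le> 2 ^ j * u" if "i \<le> j" "0 \<le> u" for i j u
    using that by (intro mult_right_mono power_increasing) simp_all
  have "(norm (T a))\<^sup>2 \<le> K\<^sup>2 * (norm a)\<^sup>2"
    using T[of a] by (simp add: power_mono flip: power_mult_distrib)
  then have child: "tree_excess T c s (y + b) \<le> 2 ^ h * (2 * (norm y)\<^sup>2 + 2 * (K\<^sup>2 * (norm a)\<^sup>2))"
    if "s \<in> {l, r}" "norm b = norm (T a)" for s b
  proof -
    have "height s \<le> h"
      using that by (auto simp: h_def)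
    then have "2 ^ height s * K\<^sup>2 \<le> c\<^sup>2"
      using mono[of "height s" "Suc h" "K\<^sup>2"] c_Suc by simp
    then have "tree_excess T c s (y + b) \<le> 2 ^ height s * (norm (y + b))\<^sup>2"
      using that Node.IH by auto
    also have "\<dots> \<le> 2 ^ h * (norm (y + b))\<^sup>2"
      using mono \<open>height s \<le> h\<close> by simp
    also have "\<dots> \<le> 2 ^ h * (2 * (norm y)\<^sup>2 + 2 * (K\<^sup>2 * (norm a)\<^sup>2))"
      using norm_add_sq_le[of y b] \<open>(norm (T a))\<^sup>2 \<le> K\<^sup>2 * (norm a)\<^sup>2\<close> that(2)
      by (intro mult_left_mono) simp_all
    finally show ?thesis .
  qed
  have "tree_excess T c (Node l a r) y
      \<le> 2 ^ h * (2 * (norm y)\<^sup>2 + 2 * (K\<^sup>2 * (norm a)\<^sup>2)) - c\<^sup>2 * (norm a)\<^sup>2"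
    using child[of l "T a"] child[of r "- T a"] by simp
  also have "\<dots> = 2 ^ Suc h * (norm y)\<^sup>2 + (2 ^ Suc h * K\<^sup>2 - c\<^sup>2) * (norm a)\<^sup>2"
    by (simp add: algebra_simps)
  also have "\<dots> \<le> 2 ^ Suc h * (norm y)\<^sup>2"
    using c_Suc by (simp add: mult_nonpos_nonneg)
  finally show ?case
    by (simp add: h_def)
qed

lemma tree_excess_Node_amplitude:
  fixes T :: "'a::real_normed_vector \<Rightarrow> 'b::real_normed_vector"
  assumes "linear T" "1 \<le> k"
  shows "level_length k * tree_excess T c (Node l (haar_amplitude k *\<^sub>R a) r) y
     = level_length (Suc k) * tree_excess T c l (y + haar_amplitude k *\<^sub>R T a)
       + level_length (Suc k) * tree_excess T c r (y - haar_amplitude k *\<^sub>R T a)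
       - c\<^sup>2 * (norm a)\<^sup>2"
proof -
  have "level_length k * (c\<^sup>2 * (norm (haar_amplitude k *\<^sub>R a))\<^sup>2) = c\<^sup>2 * (norm a)\<^sup>2"
    using level_length_mult_haar_amplitude_sq[OF assms(2)]
    by (simp add: power_mult_distrib mult_ac)
  then show ?thesis
    using assms by (simp add: level_length_Suc linear_scale algebra_simps)
qed

lemma haar_excess_dyadic_layers:
  fixes T :: "'a::real_normed_vector \<Rightarrow> 'b::real_normed_vector"
  assumes "linear T" "J \<in> dyadic_tree" "fst J + m = Suc n"
  shows "haar_excess c T (dyadic_layers 1 n) x J y
    = level_length (fst J) * tree_excess T c (coeff_tree x J m) y"
  using assms(2,3)
proof (induction m arbitrary: J y)
  case 0
  then have "dyadic_layers 1 n \<inter> dyadic_subtree J = {}"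
    by (auto simp: dyadic_layers_def dest: dyadic_subtree_level)
  then show ?case
    by (simp add: haar_excess_disjoint)
next
  case (Suc m)
  have J: "J \<in> dyadic_layers 1 n" "1 \<le> fst J"
    using Suc.prems by (auto simp: dyadic_layers_def mem_dyadic_tree)
  have "left_child J \<in> dyadic_tree" "right_child J \<in> dyadic_tree"
    using child_in_dyadic_tree[OF Suc.prems(1)] by simp_all
  then have IH: "haar_excess c T (dyadic_layers 1 n) x (left_child J) y'
      = level_length (Suc (fst J)) * tree_excess T c (coeff_tree x (left_child J) m) y'"
    "haar_excess c T (dyadic_layers 1 n) x (right_child J) y'
      = level_length (Suc (fst J)) * tree_excess T c (coeff_tree x (right_child J) m) y'" for y'
    using Suc.IH Suc.prems(2) by simp_all
  let ?y = "haar_amplitude (fst J) *\<^sub>R T (x J)"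
  have "haar_excess c T (dyadic_layers 1 n) x J y
    = haar_excess c T (dyadic_layers 1 n) x (left_child J) (y + ?y)
      + haar_excess c T (dyadic_layers 1 n) x (right_child J) (y - ?y) - c\<^sup>2 * (norm (x J))\<^sup>2"
    using J by (simp add: haar_excess_split[OF finite_dyadic_layers Suc.prems(1)] node_term_def)
  then show ?case
    unfolding coeff_tree.simps tree_excess_Node_amplitude[OF assms(1) J(2)] IH .
qed

section \<open>Sets of bounded local height\<close>

lemma card_branch_dyadic_subtree_child:
  assumes "finite S" "J \<in> dyadic_tree" "C \<in> {left_child J, right_child J}" "t \<in> node_interval C"
  shows "card (S \<inter> dyadic_subtree C \<inter> branch t) + (if J \<in> S then 1 else 0)
    \<le> card (S \<inter> dyadic_subtree J \<inter> branch t)"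
proof -
  let ?A = "S \<inter> dyadic_subtree C \<inter> branch t" and ?B = "S \<inter> dyadic_subtree J \<inter> branch t"
  have "dyadic_subtree C \<subseteq> dyadic_subtree J" "J \<notin> dyadic_subtree C"
    using assms(2,3) dyadic_subtree_unfold[of J] not_in_dyadic_subtree_child[OF assms(3)]
    by (auto simp: mem_dyadic_tree)
  moreover have "J \<in> dyadic_subtree J \<inter> branch t"
    using assms(2-4) node_interval_children(1)[OF assms(2)]
    by (auto simp: mem_branch_iff self_in_dyadic_subtree mem_dyadic_tree)
  ultimately have A: "J \<notin> ?A" "?A \<subseteq> ?B" "J \<in> S \<Longrightarrow> insert J ?A \<subseteq> ?B"
    by auto
  have fin: "finite ?A" "finite ?B"
    using assms(1) by simp_all
  show ?thesis
  proof (cases "J \<in> S")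
    case True
    then have "card (insert J ?A) \<le> card ?B"
      by (rule card_mono[OF fin(2) A(3)])
    then show ?thesis
      using True A(1) fin(1) by simp
  next
    case False
    then show ?thesis
      using A(2) fin(2) by (simp add: card_mono)
  qed
qed

lemma branch_count_children_le:
  assumes "finite S" "J \<in> dyadic_tree"
    and m: "\<forall>t\<in>node_interval J. card (S \<inter> dyadic_subtree J \<inter> branch t) \<le> m"
  shows "C \<in> {left_child J, right_child J} \<Longrightarrow>
      \<forall>t\<in>node_interval C. card (S \<inter> dyadic_subtree C \<inter> branch t) \<le> m - (if J \<in> S then 1 else 0)"
    and "J \<in> S \<Longrightarrow> 1 \<le> m"
proof -
  have count: "card (S \<inter> dyadic_subtree C \<inter> branch t) + (if J \<in> S then 1 else 0) \<le> m"
    if "C \<in> {left_child J, right_child J}" "t \<in> node_interval C" for C t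
  proof -
    have "t \<in> node_interval J"
      using that node_interval_children(1)[OF assms(2)] by auto
    then show ?thesis
      using card_branch_dyadic_subtree_child[OF assms(1,2) that] m by fastforce
  qed
  show "C \<in> {left_child J, right_child J} \<Longrightarrow>
      \<forall>t\<in>node_interval C. card (S \<inter> dyadic_subtree C \<inter> branch t) \<le> m - (if J \<in> S then 1 else 0)"
    using count by fastforce
  show "J \<in> S \<Longrightarrow> 1 \<le> m"
    using count[of "left_child J"] node_interval_nonempty by fastforce
qed

text \<open>Nodes of \<open>S\<close> become tree nodes; at a node outside \<open>S\<close> the excess is the mean over
  the two children and the larger one is kept, so only nodes of \<open>S\<close> add to the height.\<close>
lemma haar_excess_le_tree_excess:
  fixes T :: "'a::real_normed_vector \<Rightarrow> 'b::real_normed_vector"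
  assumes "finite S" "linear T" "J \<in> dyadic_tree"
    and "\<forall>t\<in>node_interval J. card (S \<inter> dyadic_subtree J \<inter> branch t) \<le> m"
  shows "\<exists>z. height z \<le> m \<and> haar_excess c T S x J y \<le> level_length (fst J) * tree_excess T c z y"
  using assms(1,3,4)
proof (induction J arbitrary: m y rule: dyadic_subtree_induct)
  case (disjoint J)
  then show ?case
    by (intro exI[of _ Leaf]) (simp add: haar_excess_disjoint)
next
  case (node J)
  let ?m = "m - (if J \<in> S then 1 else 0)" and ?y = "node_term S (T \<circ> x) J"
  note count = branch_count_children_le[OF assms(1) node.hyps node.prems]
  obtain zl where zl: "height zl \<le> ?m" "haar_excess c T S x (left_child J) (y + ?y)
      \<le> level_length (Suc (fst J)) * tree_excess T c zl (y + ?y)"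
    using node.IH(1)[OF count(1)] by auto
  obtain zr where zr: "height zr \<le> ?m" "haar_excess c T S x (right_child J) (y - ?y)
      \<le> level_length (Suc (fst J)) * tree_excess T c zr (y - ?y)"
    using node.IH(2)[OF count(1)] by auto
  have k: "1 \<le> fst J"
    using node.hyps by (simp add: mem_dyadic_tree)
  note split = haar_excess_split[OF assms(1) node.hyps, of c T x y]
  show ?case
  proof (cases "J \<in> S")
    case True
    have "height (Node zl (haar_amplitude (fst J) *\<^sub>R x J) zr) \<le> m"
      using zl(1) zr(1) count(2)[OF True] True by simp
    moreover have "haar_excess c T S x J y
        \<le> level_length (fst J) * tree_excess T c (Node zl (haar_amplitude (fst J) *\<^sub>R x J) zr) y"
      unfolding tree_excess_Node_amplitude[OF assms(2) k] split
      using zl(2) zr(2) True by (simp add: node_term_def)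
    ultimately show ?thesis
      by blast
  next
    case False
    then have "haar_excess c T S x J y
        \<le> level_length (fst J) * ((tree_excess T c zl y + tree_excess T c zr y) / 2)"
      using zl(2) zr(2) by (simp add: split node_term_def level_length_Suc[OF k] algebra_simps)
    also have "\<dots> \<le> level_length (fst J) * max (tree_excess T c zl y) (tree_excess T c zr y)"
      by (intro mult_left_mono) (simp_all add: level_length_def)
    finally show ?thesis
      using zl(1) zr(1) False by (auto simp: max_def split: if_splits)
  qed
qed

lemma tree_excess_nonpos_of_dyadic_layers:
  fixes T :: "'a::real_normed_vector \<Rightarrow> 'b::real_normed_vector"
  assumes "linear T" "\<And>x. haar_excess c T (dyadic_layers 1 n) x (1, 1) 0 \<le> 0" "height z \<le> n"
  shows "tree_excess T c z 0 \<le> 0"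
proof -
  obtain x where "tree_excess T c (coeff_tree x (1, 1) n) 0 = tree_excess T c z 0"
    using tree_excess_eq_coeff_tree[OF assms(1) _ assms(3)] by fastforce
  moreover have "haar_excess c T (dyadic_layers 1 n) x (1, 1) 0
      = tree_excess T c (coeff_tree x (1, 1) n) 0"
    using haar_excess_dyadic_layers[OF assms(1), of "(1, 1)" n n]
    by (simp add: dyadic_tree_def level_length_def)
  ultimately show ?thesis
    using assms(2)[of x] by simp
qed

section \<open>The constant \<open>tau\<close>\<close>

lemma haar_excess_root:
  assumes "S \<subseteq> dyadic_tree"
  shows "haar_excess c T S x (1, 1) 0
    = (LINT t:{0..<1}|lborel. (norm (\<Sum>(k, j)\<in>S. haar k (int j) t *\<^sub>R T (x (k, j))))\<^sup>2)
      - c\<^sup>2 * (\<Sum>(k, j)\<in>S. (norm (x (k, j)))\<^sup>2)"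
proof -
  have "S \<inter> dyadic_subtree (1, 1) = S"
    unfolding dyadic_subtree_root using assms by blast
  then show ?thesis
    unfolding haar_excess_def haar_partial_sum_def node_interval_root by (simp add: split_def)
qed

lemma L2_norm01_le_iff:
  assumes "0 \<le> c" "0 \<le> P"
  shows "L2_norm01 f \<le> c * sqrt P \<longleftrightarrow> (LINT t:{0..<1}|lborel. (norm (f t))\<^sup>2) \<le> c\<^sup>2 * P"
proof -
  have "c * sqrt P = sqrt (c\<^sup>2 * P)"
    using assms by (simp add: real_sqrt_mult)
  then show ?thesis
    by (simp add: L2_norm01_def)
qed

lemma tau_eq_Inf_haar_excess:
  assumes "S \<subseteq> dyadic_tree"
  shows "tau T S = Inf {c. 0 \<le> c \<and> (\<forall>x. haar_excess c T S x (1, 1) 0 \<le> 0)}"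
proof -
  have "L2_norm01 (\<lambda>t. \<Sum>(k, j)\<in>S. haar k (int j) t *\<^sub>R T (x (k, j)))
      \<le> c * sqrt (\<Sum>(k, j)\<in>S. (norm (x (k, j)))\<^sup>2)
    \<longleftrightarrow> haar_excess c T S x (1, 1) 0 \<le> 0" if "0 \<le> c" for c x
    unfolding haar_excess_root[OF assms]
    by (subst L2_norm01_le_iff[OF that]) (simp_all add: sum_nonneg split_def)
  then show ?thesis
    unfolding tau_def by (intro arg_cong[where f = Inf] Collect_cong) auto
qed

lemma
  assumes "S \<subseteq> dyadic_tree" "0 \<le> c" "\<And>x. haar_excess c T S x (1, 1) 0 \<le> 0"
  shows tau_le_of_haar_excess_nonpos: "tau T S \<le> c"
    and tau_nonneg_of_haar_excess_nonpos: "0 \<le> tau T S"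
    and haar_excess_tau_nonpos: "haar_excess (tau T S) T S x (1, 1) 0 \<le> 0"
proof -
  let ?E = "{c. 0 \<le> c \<and> (\<forall>x. haar_excess c T S x (1, 1) 0 \<le> 0)}"
  have E: "c \<in> ?E" "bdd_below ?E"
    using assms by (auto intro: bdd_belowI[of _ 0])
  have "closed ?E"
    unfolding haar_excess_def
    by (intro closed_Collect_conj closed_Collect_all closed_Collect_le continuous_intros)
  then have "Inf ?E \<in> ?E"
    using E by (intro closed_contains_Inf) auto
  moreover have "Inf ?E \<le> c"
    using E by (rule cInf_lower)
  ultimately show "tau T S \<le> c" "0 \<le> tau T S" "haar_excess (tau T S) T S x (1, 1) 0 \<le> 0"
    unfolding tau_eq_Inf_haar_excess[OF assms(1)] by blast+
qed

lemma card_branch_le_local_height: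
  assumes "finite F" "t \<in> {0..<1}"
  shows "card (F \<inter> branch t) \<le> local_height F"
proof -
  have "(\<lambda>t. card (F \<inter> branch t)) ` {0..<1} \<subseteq> {..card F}"
    using assms(1) by (auto intro: card_mono)
  then have "finite ((\<lambda>t. card (F \<inter> branch t)) ` {0..<1})"
    by (rule finite_subset) simp
  then show ?thesis
    unfolding local_height_def using assms(2) by (auto intro: Max_ge)
qed

lemma haar_excess_nonpos_of_local_height:
  fixes T :: "'a::real_normed_vector \<Rightarrow> 'b::real_normed_vector"
  assumes "finite F" "F \<subseteq> dyadic_tree" "local_height F \<le> n" "linear T"
    and "\<And>z. height z \<le> n \<Longrightarrow> tree_excess T c z 0 \<le> 0"
  shows "haar_excess c T F x (1, 1) 0 \<le> 0"
proof -
  have root: "(1, 1) \<in> dyadic_tree"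
    by (simp add: dyadic_tree_def)
  have "\<forall>t\<in>node_interval (1, 1). card (F \<inter> dyadic_subtree (1, 1) \<inter> branch t) \<le> n"
    unfolding node_interval_root dyadic_subtree_root Int_absorb2[OF assms(2)]
    using card_branch_le_local_height[OF assms(1)] assms(3) by (blast intro: order_trans)
  then obtain z where "height z \<le> n" "haar_excess c T F x (1, 1) 0 \<le> tree_excess T c z 0"
    using haar_excess_le_tree_excess[OF assms(1,4) root, of n c x 0]
    by (auto simp: level_length_def)
  then show ?thesis
    using assms(5) by (meson order_trans)
qed

text \<open>With \<open>K\<close> a bound of \<open>T\<close>, the constant \<open>sqrt (2 ^ n) * K\<close> is admissible for the full
  layers, so \<open>tau\<close> is here the infimum of a nonempty set rather than the unspecified
  \<open>Inf {}\<close>.\<close>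
lemma
  fixes T :: "'a::real_normed_vector \<Rightarrow> 'b::real_normed_vector"
  assumes "bounded_linear T"
  shows tau_dyadic_layers_nonneg: "0 \<le> tau T (dyadic_layers 1 n)"
    and haar_excess_tau_dyadic_layers_nonpos:
      "haar_excess (tau T (dyadic_layers 1 n)) T (dyadic_layers 1 n) x (1, 1) 0 \<le> 0"
proof -
  have T: "linear T"
    using assms by (rule bounded_linear.linear)
  have D: "dyadic_layers 1 n \<subseteq> dyadic_tree" and root: "(1, 1) \<in> dyadic_tree"
    by (auto simp: dyadic_layers_def dyadic_tree_def)
  obtain K where K: "\<And>a. norm (T a) \<le> K * norm a"
    using bounded_linear.bounded[OF assms] by (metis mult.commute)
  have c: "0 \<le> sqrt (2 ^ n * K\<^sup>2)"
    by simp
  have "haar_excess (sqrt (2 ^ n * K\<^sup>2)) T (dyadic_layers 1 n) x (1, 1) 0 \<le> 0" for x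
    using tree_excess_le_pow_height[OF K, of "coeff_tree x (1, 1) n" "sqrt (2 ^ n * K\<^sup>2)" 0]
      haar_excess_dyadic_layers[OF T root, of n] by (simp add: level_length_def)
  then show "0 \<le> tau T (dyadic_layers 1 n)"
    and "haar_excess (tau T (dyadic_layers 1 n)) T (dyadic_layers 1 n) x (1, 1) 0 \<le> 0"
    by (rule tau_nonneg_of_haar_excess_nonpos[OF D c], rule haar_excess_tau_nonpos[OF D c])
qed

theorem theorem3p10:
  fixes T :: "'a::banach \<Rightarrow> 'b::banach" and F :: "(nat \<times> nat) set" and n :: nat
  assumes "finite F" and "F \<subseteq> dyadic_tree" and "local_height F = n"
    and "bounded_linear T"
  shows "tau T F \<le> tau T (dyadic_layers 1 n)"
proof -
  have T: "linear T"
    using assms(4) by (rule bounded_linear.linear)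
  have "haar_excess (tau T (dyadic_layers 1 n)) T F x (1, 1) 0 \<le> 0" for x
  proof (rule haar_excess_nonpos_of_local_height[OF assms(1,2) _ T])
    show "local_height F \<le> n"
      using assms(3) by simp
    show "tree_excess T (tau T (dyadic_layers 1 n)) z 0 \<le> 0" if "height z \<le> n" for z
      using T haar_excess_tau_dyadic_layers_nonpos[OF assms(4)] that
      by (rule tree_excess_nonpos_of_dyadic_layers)
  qed
  then show ?thesis
    by (rule tau_le_of_haar_excess_nonpos[OF assms(2) tau_dyadic_layers_nonneg[OF assms(4)]])
qed

end
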